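(* Let $R$ be a ranking profile over $m$ candidates and let $\rhd$ be a ranking that is rank-priceable for $R$. Then $\rhd$ satisfies unanimous proportional justified representation (uPJR) for $R$, i.e., $u(\succ,\rhd)\geq\lfloor R(\succ)\binom{m}{2}\rfloor$ for all $\succ\in\mathcal{R}$.
   Context: Let $C$ be a set of $m$ candidates. A ranking is a strict linear order over $C$; $\mathcal{R}$ denotes the set of all rankings over $C$. A ranking profile is a function $R:\mathcal{R}\to[0,1]$ with $\sum_{\succ\in\mathcal{R}}R(\succ)=1$. For rankings $\succ,\rhd$, $u(\succ,\rhd)=|\{(x,y)\in C^2: x\succ y \text{ and } x\rhd y\}|$, and for $x\in X\subseteq C$, $u(\succ,x,X)=|\{y\in X\setminus\{x\}: x\succ y\}|$. A ranking $\rhd=x_1,\dots,x_m$ (i.e., $x_1\rhd x_2\rhd\dots\rhd x_m$) is rank-priceable for $R$ if there is $\pi:\mathcal{R}\times C\to\mathbb{R}$ such that (1) $0\leq\pi(\succ,x_i)\leq u(\succ,x_i,\{x_i,\dots,x_m\})$ for all $\succ\in\mathcal{R}$ and all $i$; (2) $\sum_{i=1}^m\pi(\succ,x_i)\leq\binom{m}{2}R(\succ)$ for all $\succ\in\mathcal{R}$; (3) $\sum_{\succ\in\mathcal{R}}\pi(\succ,x_i)\leq m-i$ for all $i\in\{1,\dots,m\}$; (4) $\sum_{\succ\in\mathcal{R}}\sum_{i=1}^m\pi(\succ,x_i)>\binom{m}{2}-1$. *)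

theory Defs
  imports Complex_Main "HOL-Combinatorics.Multiset_Permutations"
begin

text \<open>A ranking over a finite candidate set C is represented as a list
  listing every candidate exactly once, best first.  The set of all rankings
  is the library notion permutations_of_set C.\<close>

definition rankings :: "'a set \<Rightarrow> 'a list set" where
  "rankings C = permutations_of_set C"

definition prefers :: "'a list \<Rightarrow> 'a \<Rightarrow> 'a \<Rightarrow> bool" where
  "prefers r x y \<longleftrightarrow> (\<exists>i j. i < j \<and> j < length r \<and> r ! i = x \<and> r ! j = y)"

definition agree :: "'a list \<Rightarrow> 'a list \<Rightarrow> nat" where
  "agree r t = card {(x, y). prefers r x y \<and> prefers t x y}"

definition u_cand :: "'a list \<Rightarrow> 'a \<Rightarrow> 'a set \<Rightarrow> nat" where
  "u_cand r x X = card {y \<in> X - {x}. prefers r x y}"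

definition ranking_profile :: "'a set \<Rightarrow> ('a list \<Rightarrow> real) \<Rightarrow> bool" where
  "ranking_profile C R \<longleftrightarrow>
     (\<forall>r\<in>rankings C. 0 \<le> R r \<and> R r \<le> 1) \<and> (\<Sum>r\<in>rankings C. R r) = 1"

text \<open>Rank-priceability; with t = x_1,...,x_m we have x_(i+1) = t ! i (0-based).\<close>
definition rank_priceable :: "'a set \<Rightarrow> ('a list \<Rightarrow> real) \<Rightarrow> 'a list \<Rightarrow> bool" where
  "rank_priceable C R t \<longleftrightarrow> t \<in> rankings C \<and>
    (let m = card C in
     \<exists>\<pi> :: 'a list \<Rightarrow> 'a \<Rightarrow> real.
       (\<forall>r\<in>rankings C. \<forall>i<m.
          0 \<le> \<pi> r (t ! i) \<and> \<pi> r (t ! i) \<le> real (u_cand r (t ! i) (set (drop i t)))) \<and>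
       (\<forall>r\<in>rankings C. (\<Sum>i<m. \<pi> r (t ! i)) \<le> real (m choose 2) * R r) \<and>
       (\<forall>i<m. (\<Sum>r\<in>rankings C. \<pi> r (t ! i)) \<le> real m - real (i + 1)) \<and>
       (\<Sum>r\<in>rankings C. \<Sum>i<m. \<pi> r (t ! i)) > real (m choose 2) - 1)"

end

theory Submission
  imports Defs
begin

text \<open>Voter \<open>r\<close> pays for candidate \<open>t ! i\<close> at most the number of later candidates
  that \<open>r\<close> ranks below \<open>t ! i\<close>; all these pairs are distinct pairs on which \<open>r\<close> and
  \<open>t\<close> agree, so \<open>r\<close> pays at most \<open>agree r t\<close> in total. Since every voter pays at most
  \<open>R r * (m choose 2)\<close> and the total payment exceeds \<open>(m choose 2) - 1\<close>, the total
  slack is below 1, so each voter pays more than \<open>R r * (m choose 2) - 1\<close>.\<close>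

lemma prefers_in_set: "prefers r x y \<Longrightarrow> x \<in> set r \<and> y \<in> set r"
  unfolding prefers_def by auto

lemma finite_agreeing_pairs: "finite {(x, y). prefers r x y \<and> prefers t x y}"
  by (rule finite_subset[of _ "set r \<times> set r"]) (auto dest: prefers_in_set)

lemma prefers_nth_if_in_drop:
  assumes "y \<in> set (drop i t)" and "y \<noteq> t ! i"
  shows "prefers t (t ! i) y"
proof -
  obtain k where k: "k < length (drop i t)" "drop i t ! k = y"
    using assms(1) by (auto simp: in_set_conv_nth)
  with assms(2) have "k \<noteq> 0" by (cases k) auto
  with k show ?thesis
    unfolding prefers_def by (intro exI[of _ i] exI[of _ "i + k"]) auto
qed

lemma sum_u_cand_suffix_le_agree:
  assumes "distinct t"
  shows "(\<Sum>i<length t. u_cand r (t ! i) (set (drop i t))) \<le> agree r t"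
proof -
  define S where "S i = {y \<in> set (drop i t) - {t ! i}. prefers r (t ! i) y}" for i
  define pair where "pair = (\<lambda>(i, y :: 'a). (t ! i, y))"
  have "(\<Sum>i<length t. u_cand r (t ! i) (set (drop i t))) = card (SIGMA i:{..<length t}. S i)"
    unfolding u_cand_def S_def by (simp add: card_SigmaI)
  also have "\<dots> = card (pair ` (SIGMA i:{..<length t}. S i))"
    using assms by (intro card_image[symmetric]) (auto simp: inj_on_def pair_def nth_eq_iff_index_eq)
  also have "\<dots> \<le> agree r t"
    unfolding agree_def
  proof (rule card_mono[OF finite_agreeing_pairs])
    show "pair ` (SIGMA i:{..<length t}. S i) \<subseteq> {(x, y). prefers r x y \<and> prefers t x y}"
      by (auto simp: pair_def S_def prefers_nth_if_in_drop)
  qed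
  finally show ?thesis .
qed

lemma price_sum_le_agree:
  fixes \<pi> :: "'a list \<Rightarrow> 'a \<Rightarrow> real"
  assumes "distinct t"
    and "\<And>i. i < length t \<Longrightarrow> \<pi> r (t ! i) \<le> real (u_cand r (t ! i) (set (drop i t)))"
  shows "(\<Sum>i<length t. \<pi> r (t ! i)) \<le> real (agree r t)"
proof -
  have "(\<Sum>i<length t. \<pi> r (t ! i)) \<le> (\<Sum>i<length t. real (u_cand r (t ! i) (set (drop i t))))"
    using assms(2) by (intro sum_mono) auto
  also have "\<dots> \<le> real (agree r t)"
    using sum_u_cand_suffix_le_agree[OF assms(1)] by (simp only: of_nat_sum[symmetric] of_nat_le_iff)
  finally show ?thesis .
qed

lemma slack_le_total_slack:
  fixes p b :: "'b \<Rightarrow> real"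
  assumes "finite K" and "x \<in> K" and "\<And>y. y \<in> K \<Longrightarrow> p y \<le> b y"
  shows "b x - p x \<le> sum b K - sum p K"
  using member_le_sum[of x K "\<lambda>y. b y - p y"] assms by (simp add: sum_subtractf)

lemma rank_priceable_distinct_length:
  assumes "finite C" and "rank_priceable C R t"
  shows "distinct t" and "length t = card C"
  using assms permutations_of_setD[of t C] distinct_card[of t]
  by (auto simp: rank_priceable_def rankings_def)

theorem mainTheorem3:
  fixes C :: "'a set" and R :: "'a list \<Rightarrow> real" and t :: "'a list"
  assumes "finite C"
    and "ranking_profile C R"
    and "rank_priceable C R t"
  shows "\<forall>r\<in>rankings C. \<lfloor>R r * real (card C choose 2)\<rfloor> \<le> int (agree r t)"
proof
  fix r assume r: "r \<in> rankings C"
  define M where "M = real (card C choose 2)"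
  have fin: "finite (rankings C)"
    using assms(1) by (simp add: rankings_def)
  note t = rank_priceable_distinct_length[OF assms(1,3)]
  obtain \<pi> :: "'a list \<Rightarrow> 'a \<Rightarrow> real" where
    bounded_by_u: "\<forall>r\<in>rankings C. \<forall>i<card C. \<pi> r (t ! i) \<le> real (u_cand r (t ! i) (set (drop i t)))"
    and within_budget: "\<forall>r\<in>rankings C. (\<Sum>i<card C. \<pi> r (t ! i)) \<le> M * R r"
    and total: "(\<Sum>r\<in>rankings C. \<Sum>i<card C. \<pi> r (t ! i)) > M - 1"
    using assms(3) unfolding rank_priceable_def Let_def M_def by blast
  define pay where "pay r = (\<Sum>i<card C. \<pi> r (t ! i))" for r
  have "M * R r - pay r \<le> (\<Sum>r\<in>rankings C. M * R r) - sum pay (rankings C)"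
    using within_budget by (intro slack_le_total_slack[OF fin r]) (simp add: pay_def)
  also have "\<dots> < 1"
    using assms(2) total by (simp add: ranking_profile_def pay_def sum_distrib_left[symmetric])
  finally have "M * R r < pay r + 1" by simp
  moreover have "pay r \<le> real (agree r t)"
    unfolding pay_def t(2)[symmetric] using bounded_by_u r t by (intro price_sum_le_agree) auto
  ultimately have "R r * M < real (agree r t) + 1"
    by (simp add: mult.commute)
  then show "\<lfloor>R r * real (card C choose 2)\<rfloor> \<le> int (agree r t)"
    unfolding M_def by linarith
qed

end
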